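(* Let $N\ge 1$ and $0<s<1$. Then \[ \lim_{p\to\infty} \Big(\mathfrak{m}_{s,p}(\mathbb{R}^N)\Big)^\frac{1}{p}=1. \]
   Context: For $p>N/s$: $[\varphi]_{W^{s,p}(\mathbb{R}^N)}=\left(\iint_{\mathbb{R}^N\times\mathbb{R}^N}\frac{|\varphi(x)-\varphi(y)|^p}{|x-y|^{N+s\,p}}dx\,dy\right)^{1/p}$; $[\varphi]_{C^{0,\alpha}(\mathbb{R}^N)}=\sup_{x\ne y}\frac{|\varphi(x)-\varphi(y)|}{|x-y|^\alpha}$; $\alpha_{s,p}=s-N/p$; $\mathfrak{m}_{s,p}(\mathbb{R}^N)=\inf\{[\varphi]^p_{W^{s,p}(\mathbb{R}^N)}:\varphi\in C^\infty_0(\mathbb{R}^N),\ [\varphi]_{C^{0,\alpha_{s,p}}(\mathbb{R}^N)}=1\}$. *)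

theory Defs
  imports "HOL-Analysis.Analysis"
begin

text \<open>C-infinity smoothness: all iterated Frechet derivatives exist.
  D vs x is the iterated derivative in the directions listed in vs.\<close>
definition smooth_fun :: "('a::euclidean_space \<Rightarrow> real) \<Rightarrow> bool" where
  "smooth_fun f \<longleftrightarrow> (\<exists>D :: 'a list \<Rightarrow> 'a \<Rightarrow> real. D [] = f \<and>
      (\<forall>vs x. (D vs has_derivative (\<lambda>h. D (h # vs) x)) (at x)))"

definition test_fun :: "('a::euclidean_space \<Rightarrow> real) \<Rightarrow> bool" where
  "test_fun f \<longleftrightarrow> smooth_fun f \<and> compact (closure {x. f x \<noteq> 0})"

definition gagliardo_pow :: "real \<Rightarrow> real \<Rightarrow> ('a::euclidean_space \<Rightarrow> real) \<Rightarrow> ennreal" where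
  "gagliardo_pow s p f = (\<integral>\<^sup>+ z. ennreal (\<bar>f (fst z) - f (snd z)\<bar> powr p /
       norm (fst z - snd z) powr (real DIM('a) + s * p)) \<partial>(lborel \<Otimes>\<^sub>M (lborel :: 'a measure)))"

definition holder_semi :: "real \<Rightarrow> ('a::real_normed_vector \<Rightarrow> real) \<Rightarrow> ereal" where
  "holder_semi \<alpha> f = (SUP z \<in> {z. fst z \<noteq> snd z}.
       ereal (\<bar>f (fst z) - f (snd z)\<bar> / norm (fst z - snd z) powr \<alpha>))"

definition alpha_sp :: "'a::euclidean_space itself \<Rightarrow> real \<Rightarrow> real \<Rightarrow> real" where
  "alpha_sp _ s p = s - real DIM('a) / p"

definition m_sp :: "'a::euclidean_space itself \<Rightarrow> real \<Rightarrow> real \<Rightarrow> ennreal" where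
  "m_sp T s p = (INF f \<in> {f :: 'a \<Rightarrow> real. test_fun f \<and> holder_semi (alpha_sp T s p) f = 1}.
       gagliardo_pow s p f)"

end

theory Submission
  imports Defs "HOL-Computational_Algebra.Polynomial"
begin

text \<open>
  Upper bound: normalize a fixed smooth bump supported in the unit ball to Hoelder seminorm 1 for
  alpha = s - N/p.  For large p the normalizing factor stays bounded, so these functions are uniformly
  Lipschitz and bounded, and their Gagliardo integrands are all dominated by one integrable function:
  a constant near the diagonal (the Lipschitz bound where |x - y| is small, the Hoelder bound elsewhere,
  using alpha p - N - s p = -2N) and a multiple of b^beta |x - y|^(-N-beta) far from it.  Hence m_{s,p}
  stays bounded and limsup m_{s,p}^(1/p) <= 1.

  Lower bound: if [phi]_alpha = 1, then |phi x - phi y| > (1 - g) |x - y|^alpha for some x, y.  On the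
  balls of radius g^(2/s) |x - y| around x and y the integrand is at least (1 - 5g)^p |x - y|^(-2N)
  times a factor independent of p, while the product of the balls has measure proportional to
  |x - y|^(2N).  Hence m_{s,p} >= c_g (1 - 5g)^p, and liminf m_{s,p}^(1/p) >= 1 - 5g for all small g > 0.
\<close>

section \<open>A smooth bump function\<close>

definition flat_cutoff :: "real poly \<Rightarrow> real \<Rightarrow> real" where
  "flat_cutoff q t = (if 0 < t then poly q (1 / t) * exp (- 1 / t) else 0)"

text \<open>(q(1/t) e^(-1/t))' = t^(-2) (q - q')(1/t) e^(-1/t): the family is closed under differentiation.\<close>
definition flat_cutoff_deriv :: "real poly \<Rightarrow> real poly" where
  "flat_cutoff_deriv q = [:0, 0, 1:] * (q - pderiv q)"

lemma poly_times_exp_neg_tendsto_0: "((\<lambda>u. poly q u * exp (- u)) \<longlongrightarrow> (0::real)) at_top"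
proof -
  have "((\<lambda>u. \<Sum>i\<le>degree q. coeff q i * (u ^ i / exp u)) \<longlongrightarrow> (\<Sum>i\<le>degree q. coeff q i * 0)) at_top"
    by (intro tendsto_sum tendsto_mult tendsto_const tendsto_power_div_exp_0)
  moreover have "(\<Sum>i\<le>degree q. coeff q i * (u ^ i / exp u)) = poly q u * exp (- u)" for u
    by (simp add: poly_altdef exp_minus field_simps sum_divide_distrib)
  ultimately show ?thesis
    by simp
qed

lemma flat_cutoff_has_real_derivative:
  "(flat_cutoff q has_real_derivative flat_cutoff (flat_cutoff_deriv q) t) (at t)"
proof -
  consider "0 < t" | "t < 0" | "t = 0"
    by linarith
  then show ?thesis
  proof cases
    case 1
    have "((\<lambda>t. poly q (1 / t) * exp (- 1 / t)) has_real_derivative flat_cutoff (flat_cutoff_deriv q) t) (at t)"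
      using 1 by (auto intro!: derivative_eq_intros
          simp: flat_cutoff_def flat_cutoff_deriv_def power2_eq_square field_simps)
    then show ?thesis
      by (rule has_field_derivative_transform_within_open[where S = "{0<..}"])
        (use 1 in \<open>auto simp: flat_cutoff_def\<close>)
  next
    case 2
    have "((\<lambda>t. 0) has_real_derivative flat_cutoff (flat_cutoff_deriv q) t) (at t)"
      using 2 by (simp add: flat_cutoff_def)
    then show ?thesis
      by (rule has_field_derivative_transform_within_open[where S = "{..<0}"])
        (use 2 in \<open>auto simp: flat_cutoff_def\<close>)
  next
    case 3
    have "((\<lambda>t. poly (pCons 0 q) (inverse t) * exp (- inverse t)) \<longlongrightarrow> 0) (at_right 0)"
      by (rule filterlim_compose[OF poly_times_exp_neg_tendsto_0 filterlim_inverse_at_top_right])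
    then have "((\<lambda>t. flat_cutoff q t / t) \<longlongrightarrow> 0) (at_right 0)"
      by (rule Lim_transform_eventually)
        (auto simp: eventually_at_right_field flat_cutoff_def field_simps intro!: exI[of _ 1])
    moreover have "((\<lambda>t. flat_cutoff q t / t) \<longlongrightarrow> 0) (at_left 0)"
      by (rule Lim_transform_eventually[OF tendsto_const])
        (auto simp: eventually_at_left_field flat_cutoff_def intro!: exI[of _ "-1"])
    ultimately show ?thesis
      using 3 by (simp add: has_field_derivative_iff filterlim_split_at_real flat_cutoff_def)
  qed
qed

lemma smooth_fun_if_closed_under_derivative:
  fixes S :: "('a::euclidean_space \<Rightarrow> real) set"
  assumes closed: "\<And>f. f \<in> S \<Longrightarrow> \<exists>D. (\<forall>h. D h \<in> S) \<and> (\<forall>x. (f has_derivative (\<lambda>h. D h x)) (at x))"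
    and "f \<in> S"
  shows "smooth_fun f"
proof -
  obtain D where D: "\<And>g h. g \<in> S \<Longrightarrow> D g h \<in> S"
    and D_deriv: "\<And>g x. g \<in> S \<Longrightarrow> (g has_derivative (\<lambda>h. D g h x)) (at x)"
    using closed by metis
  define Df where "Df vs = foldr (\<lambda>h g. D g h) vs f" for vs
  have Df_in: "Df vs \<in> S" for vs
    by (induction vs) (use \<open>f \<in> S\<close> D in \<open>auto simp: Df_def\<close>)
  show ?thesis
    unfolding smooth_fun_def
    by (rule exI[of _ Df]) (use Df_in D_deriv in \<open>auto simp: Df_def\<close>)
qed

inductive_set bump_algebra :: "('a::euclidean_space \<Rightarrow> real) set" where
  const: "(\<lambda>x. c) \<in> bump_algebra"
| linear: "(\<lambda>x. x \<bullet> b) \<in> bump_algebra"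
| cutoff: "(\<lambda>x. flat_cutoff q (1 - x \<bullet> x)) \<in> bump_algebra"
| add: "f \<in> bump_algebra \<Longrightarrow> g \<in> bump_algebra \<Longrightarrow> (\<lambda>x. f x + g x) \<in> bump_algebra"
| mult: "f \<in> bump_algebra \<Longrightarrow> g \<in> bump_algebra \<Longrightarrow> (\<lambda>x. f x * g x) \<in> bump_algebra"

lemma flat_cutoff_radial_has_derivative:
  "((\<lambda>x::'a::euclidean_space. flat_cutoff q (1 - x \<bullet> x)) has_derivative
     (\<lambda>h. flat_cutoff (flat_cutoff_deriv q) (1 - x \<bullet> x) * (x \<bullet> (- 2 *\<^sub>R h)))) (at x)"
proof -
  have "((\<lambda>x::'a. 1 - x \<bullet> x) has_derivative (\<lambda>h. x \<bullet> (- 2 *\<^sub>R h))) (at x)"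
    by (auto intro!: derivative_eq_intros simp: inner_commute algebra_simps)
  moreover have "(flat_cutoff q has_derivative (*) (flat_cutoff (flat_cutoff_deriv q) (1 - x \<bullet> x))) (at (1 - x \<bullet> x))"
    using flat_cutoff_has_real_derivative by (simp add: has_field_derivative_def)
  ultimately show ?thesis
    by (auto dest: diff_chain_at simp: o_def)
qed

lemma bump_algebra_has_derivative:
  "f \<in> bump_algebra \<Longrightarrow>
    \<exists>D. (\<forall>h. D h \<in> bump_algebra) \<and> (\<forall>x. (f has_derivative (\<lambda>h. D h x)) (at x))"
proof (induction rule: bump_algebra.induct)
  case (const c)
  show ?case
    by (rule exI[of _ "\<lambda>h x. 0"]) (simp add: bump_algebra.const)
next
  case (linear b)
  show ?case
    by (rule exI[of _ "\<lambda>h x. h \<bullet> b"]) (auto intro!: derivative_eq_intros bump_algebra.const)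
next
  case (cutoff q)
  show ?case
    by (rule exI[of _ "\<lambda>h x. flat_cutoff (flat_cutoff_deriv q) (1 - x \<bullet> x) * (x \<bullet> (- 2 *\<^sub>R h))"])
      (intro conjI allI flat_cutoff_radial_has_derivative bump_algebra.mult bump_algebra.cutoff bump_algebra.linear)
next
  case (add f g)
  then obtain Df Dg where "\<forall>h. Df h \<in> bump_algebra" "\<forall>x. (f has_derivative (\<lambda>h. Df h x)) (at x)"
    and "\<forall>h. Dg h \<in> bump_algebra" "\<forall>x. (g has_derivative (\<lambda>h. Dg h x)) (at x)"
    by blast
  then show ?case
    by (intro exI[of _ "\<lambda>h x. Df h x + Dg h x"]) (auto intro: bump_algebra.add has_derivative_add)
next
  case (mult f g)
  then obtain Df Dg where "\<forall>h. Df h \<in> bump_algebra" "\<forall>x. (f has_derivative (\<lambda>h. Df h x)) (at x)"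
    and "\<forall>h. Dg h \<in> bump_algebra" "\<forall>x. (g has_derivative (\<lambda>h. Dg h x)) (at x)"
    by blast
  with mult.hyps show ?case
    by (intro exI[of _ "\<lambda>h x. f x * Dg h x + Df h x * g x"])
      (auto intro!: bump_algebra.add bump_algebra.mult has_derivative_mult)
qed

lemma smooth_fun_bump_algebra: "f \<in> bump_algebra \<Longrightarrow> smooth_fun f"
  by (rule smooth_fun_if_closed_under_derivative[OF bump_algebra_has_derivative])

lemma test_fun_cmult:
  assumes "test_fun f"
  shows "test_fun (\<lambda>x. c * f x)"
proof -
  obtain D where "D [] = f" and D: "\<And>vs x. (D vs has_derivative (\<lambda>h. D (h # vs) x)) (at x)"
    using assms by (auto simp: test_fun_def smooth_fun_def)
  then have "smooth_fun (\<lambda>x. c * f x)"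
    unfolding smooth_fun_def
    by (intro exI[of _ "\<lambda>vs x. c * D vs x"]) (auto intro: has_derivative_mult_right)
  moreover have "closure {x. c * f x \<noteq> 0} \<subseteq> closure {x. f x \<noteq> 0}"
    by (intro closure_mono) auto
  ultimately show ?thesis
    using assms closed_closure compact_Int_closed[of "closure {x. f x \<noteq> 0}" "closure {x. c * f x \<noteq> 0}"]
    by (auto simp: test_fun_def Int_absorb1)
qed

definition bump :: "'a::euclidean_space \<Rightarrow> real" where
  "bump x = flat_cutoff 1 (1 - x \<bullet> x)"

lemma bump_eq_0: "1 \<le> norm x \<Longrightarrow> bump x = 0"
  using one_le_power[of "norm x" 2] by (simp add: bump_def flat_cutoff_def power2_norm_eq_inner)

lemma abs_bump_le_1: "\<bar>bump x\<bar> \<le> 1"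
  by (simp add: bump_def flat_cutoff_def)

lemma bump_0: "bump 0 = exp (- 1)"
  by (simp add: bump_def flat_cutoff_def)

lemma test_fun_bump: "test_fun bump"
proof -
  have "{x. bump x \<noteq> 0} \<subseteq> cball 0 1"
    using bump_eq_0 by (force simp: not_le)
  then have "compact (closure {x. bump x \<noteq> 0})"
    using bounded_cball bounded_subset compact_closure by blast
  moreover have "smooth_fun bump"
    unfolding bump_def by (intro smooth_fun_bump_algebra bump_algebra.cutoff)
  ultimately show ?thesis
    by (simp add: test_fun_def)
qed

lemma abs_flat_cutoff_deriv_1_le: "\<bar>flat_cutoff (flat_cutoff_deriv 1) t\<bar> \<le> 4"
proof (cases "0 < t")
  case True
  define u where "u = 1 / t"
  have "u / 2 \<le> exp (u / 2)"
    using exp_ge_add_one_self[of "u / 2"] by linarith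
  then have "(u / 2) ^ 2 \<le> exp (u / 2) ^ 2"
    using True by (intro power_mono) (auto simp: u_def)
  then have "u ^ 2 * exp (- u) \<le> 4"
    by (simp add: exp_minus power_divide field_simps flip: exp_double)
  moreover have "flat_cutoff (flat_cutoff_deriv 1) t = u ^ 2 * exp (- u)"
    using True by (simp add: flat_cutoff_def flat_cutoff_deriv_def u_def power2_eq_square)
  ultimately show ?thesis
    by simp
qed (simp add: flat_cutoff_def)

lemma bump_lipschitz: "\<bar>bump x - bump y\<bar> \<le> 8 * norm (x - y)"
proof -
  let ?D = "\<lambda>x h. flat_cutoff (flat_cutoff_deriv 1) (1 - x \<bullet> x) * (x \<bullet> (- 2 *\<^sub>R h))"
  have "norm (bump x - bump y) \<le> 8 * norm (x - y)"
  proof (rule differentiable_bound[where S = UNIV and f' = ?D])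
    fix x :: 'a
    show "(bump has_derivative ?D x) (at x within UNIV)"
      unfolding bump_def by (rule flat_cutoff_radial_has_derivative)
    show "onorm (?D x) \<le> 8"
    proof (rule onorm_le)
      fix h :: 'a
      show "norm (?D x h) \<le> 8 * norm h"
      proof (cases "x \<bullet> x < 1")
        case True
        then have "norm x \<le> 1"
          by (simp add: norm_eq_sqrt_inner)
        have "\<bar>x \<bullet> (- 2 *\<^sub>R h)\<bar> \<le> norm x * (2 * norm h)"
          using Cauchy_Schwarz_ineq2[of x "- 2 *\<^sub>R h"] by simp
        also have "\<dots> \<le> 2 * norm h"
          using \<open>norm x \<le> 1\<close> by (simp add: mult_left_le_one_le)
        finally have "\<bar>x \<bullet> (- 2 *\<^sub>R h)\<bar> \<le> 2 * norm h" .
        from mult_mono[OF abs_flat_cutoff_deriv_1_le this] show ?thesis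
          by (simp add: abs_mult)
      qed (simp add: flat_cutoff_def)
    qed
  qed auto
  then show ?thesis
    by simp
qed

section \<open>The Hoelder seminorm\<close>

lemma holder_semi_ge_quotient:
  "x \<noteq> y \<Longrightarrow> ereal (\<bar>f x - f y\<bar> / norm (x - y) powr \<alpha>) \<le> holder_semi \<alpha> f"
  unfolding holder_semi_def by (rule SUP_upper2[of "(x, y)"]) auto

lemma abs_diff_le_holder_semi:
  assumes "holder_semi \<alpha> f \<le> ereal L"
  shows "\<bar>f x - f y\<bar> \<le> L * norm (x - y) powr \<alpha>"
proof (cases "x = y")
  case False
  then have "\<bar>f x - f y\<bar> / norm (x - y) powr \<alpha> \<le> L"
    using order_trans[OF holder_semi_ge_quotient[OF False] assms] by simp
  then show ?thesis
    using False by (simp add: divide_le_eq)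
qed simp

lemma holder_semi_cmult:
  fixes f :: "'a::euclidean_space \<Rightarrow> real"
  assumes "0 < c"
  shows "holder_semi \<alpha> (\<lambda>x. c * f x) = ereal c * holder_semi \<alpha> f"
proof -
  obtain e :: 'a where "e \<in> Basis"
    using nonempty_Basis by blast
  then have "(0, e) \<in> {z::'a \<times> 'a. fst z \<noteq> snd z}"
    by auto
  then have "ereal c * holder_semi \<alpha> f = (SUP z\<in>{z. fst z \<noteq> snd z}.
      ereal c * ereal (\<bar>f (fst z) - f (snd z)\<bar> / norm (fst z - snd z) powr \<alpha>))"
    unfolding holder_semi_def using assms by (intro Sup_ereal_mult_left') auto
  also have "\<dots> = holder_semi \<alpha> (\<lambda>x. c * f x)"
    unfolding holder_semi_def using assms
    by (intro SUP_cong) (auto simp: abs_mult simp flip: right_diff_distrib)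
  finally show ?thesis
    by simp
qed

lemma holder_semi_le_lipschitz_bounded:
  assumes "0 \<le> \<alpha>" "\<alpha> \<le> 1" "0 \<le> L"
    and lip: "\<And>x y. \<bar>f x - f y\<bar> \<le> L * norm (x - y)" and bounded: "\<And>x. \<bar>f x\<bar> \<le> M"
  shows "holder_semi \<alpha> f \<le> ereal (L + 2 * M)"
  unfolding holder_semi_def
proof (rule SUP_least)
  fix z :: "'a \<times> 'a"
  assume "z \<in> {z. fst z \<noteq> snd z}"
  then have r: "0 < norm (fst z - snd z)" (is "0 < ?r")
    by simp
  have "0 \<le> M"
    using bounded[of 0] by linarith
  have "\<bar>f (fst z) - f (snd z)\<bar> \<le> (L + 2 * M) * ?r powr \<alpha>"
  proof (cases "?r \<le> 1")
    case True
    then have "L * ?r \<le> L * ?r powr \<alpha>"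
      using powr_mono'[of \<alpha> 1 ?r] assms r by (simp add: mult_left_mono)
    moreover have "0 \<le> 2 * M * ?r powr \<alpha>"
      using \<open>0 \<le> M\<close> by simp
    ultimately show ?thesis
      using lip[of "fst z" "snd z"] by (simp add: distrib_right)
  next
    case False
    then have "1 \<le> ?r powr \<alpha>"
      using assms by (simp add: ge_one_powr_ge_zero)
    then have "2 * M \<le> 2 * M * ?r powr \<alpha>"
      using \<open>0 \<le> M\<close> mult_left_mono[of 1 "?r powr \<alpha>" "2 * M"] by simp
    moreover have "0 \<le> L * ?r powr \<alpha>"
      using \<open>0 \<le> L\<close> by simp
    ultimately show ?thesis
      using bounded[of "fst z"] bounded[of "snd z"] by (simp add: distrib_right)
  qed
  then show "ereal (\<bar>f (fst z) - f (snd z)\<bar> / ?r powr \<alpha>) \<le> ereal (L + 2 * M)"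
    using r by (simp add: divide_le_eq)
qed

lemma holder_semi_near_extremal:
  assumes "holder_semi \<alpha> f = 1" "c < 1"
  obtains x y where "x \<noteq> y" "c * norm (x - y) powr \<alpha> < \<bar>f x - f y\<bar>"
proof -
  have "ereal c < holder_semi \<alpha> f"
    using assms by simp
  then obtain z where "fst z \<noteq> snd z" "c < \<bar>f (fst z) - f (snd z)\<bar> / norm (fst z - snd z) powr \<alpha>"
    unfolding holder_semi_def by (auto simp: less_SUP_iff)
  then show ?thesis
    by (intro that[of "fst z" "snd z"]) (simp_all add: less_divide_eq)
qed

section \<open>A dominating function for the Gagliardo integrand\<close>

lemma nn_integral_lborel_translate:
  fixes K :: "'a::euclidean_space \<Rightarrow> ennreal"
  assumes [measurable]: "K \<in> borel_measurable borel"
  shows "(\<integral>\<^sup>+y. K (y - x) \<partial>lborel) = (\<integral>\<^sup>+h. K h \<partial>lborel)"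
proof -
  have "(\<integral>\<^sup>+h. K h \<partial>lborel) = (\<integral>\<^sup>+h. K h \<partial>distr lborel borel ((+) (- x)))"
    by (simp add: lborel_distr_plus)
  also have "\<dots> = (\<integral>\<^sup>+y. K (- x + y) \<partial>lborel)"
    by (rule nn_integral_distr) auto
  finally show ?thesis
    by simp
qed

lemma nn_integral_pair_indicator_diff:
  fixes K :: "'a::euclidean_space \<Rightarrow> ennreal"
  assumes [measurable]: "K \<in> borel_measurable borel" "A \<in> sets borel"
  shows "(\<integral>\<^sup>+z. indicator A (fst z) * K (snd z - fst z) \<partial>(lborel \<Otimes>\<^sub>M lborel))
      = emeasure lborel A * (\<integral>\<^sup>+h. K h \<partial>lborel)"
    and "(\<integral>\<^sup>+z. indicator A (snd z) * K (fst z - snd z) \<partial>(lborel \<Otimes>\<^sub>M lborel))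
      = emeasure lborel A * (\<integral>\<^sup>+h. K h \<partial>lborel)"
proof -
  have "(\<integral>\<^sup>+x. \<integral>\<^sup>+y. indicator A x * K (y - x) \<partial>lborel \<partial>lborel)
      = (\<integral>\<^sup>+x. (\<integral>\<^sup>+h. K h \<partial>lborel) * indicator A x \<partial>lborel)"
    by (intro nn_integral_cong)
      (simp add: nn_integral_cmult nn_integral_lborel_translate mult.commute)
  also have "\<dots> = emeasure lborel A * (\<integral>\<^sup>+h. K h \<partial>lborel)"
    by (subst nn_integral_cmult_indicator) (auto simp: mult.commute)
  finally have iterated: "(\<integral>\<^sup>+x. \<integral>\<^sup>+y. indicator A x * K (y - x) \<partial>lborel \<partial>lborel)
      = emeasure lborel A * (\<integral>\<^sup>+h. K h \<partial>lborel)" .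
  then show "(\<integral>\<^sup>+z. indicator A (fst z) * K (snd z - fst z) \<partial>(lborel \<Otimes>\<^sub>M lborel))
      = emeasure lborel A * (\<integral>\<^sup>+h. K h \<partial>lborel)"
    by (subst lborel.nn_integral_fst[symmetric]) auto
  from iterated show "(\<integral>\<^sup>+z. indicator A (snd z) * K (fst z - snd z) \<partial>(lborel \<Otimes>\<^sub>M lborel))
      = emeasure lborel A * (\<integral>\<^sup>+h. K h \<partial>lborel)"
    by (subst lborel_pair.nn_integral_snd[symmetric]) auto
qed

definition tail_kernel :: "real \<Rightarrow> real \<Rightarrow> 'a::euclidean_space \<Rightarrow> real" where
  "tail_kernel b \<beta> h = (if b < norm h then (b / norm h) powr \<beta> / norm h ^ DIM('a) else 0)"

lemma tail_kernel_nonneg: "0 \<le> tail_kernel b \<beta> h"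
  by (simp add: tail_kernel_def)

lemma borel_measurable_tail_kernel [measurable]:
  "(\<lambda>h. ennreal (tail_kernel b \<beta> h)) \<in> borel_measurable borel"
  unfolding tail_kernel_def by measurable

lemma dyadic_shell:
  fixes b r :: real
  assumes "0 < b" "b < r"
  obtains n :: nat where "2 ^ n * b \<le> r" "r \<le> 2 ^ (n + 1) * b"
proof -
  define n where "n = nat \<lfloor>log 2 (r / b)\<rfloor>"
  have "0 < log 2 (r / b)"
    using assms by simp
  then have "real n \<le> log 2 (r / b)" "log 2 (r / b) \<le> real n + 1"
    unfolding n_def by linarith+
  then have "2 powr real n \<le> r / b" "r / b \<le> 2 powr (real n + 1)"
    using assms by (simp_all add: le_log_iff log_le_iff)
  then show ?thesis
    using assms by (intro that) (simp_all add: powr_realpow powr_add field_simps)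
qed

lemma tail_kernel_le_dyadic_sum:
  fixes h :: "'a::euclidean_space"
  assumes b: "0 < b" and \<beta>: "0 < \<beta>"
  shows "ennreal (tail_kernel b \<beta> h)
    \<le> (\<Sum>n. ennreal (((1 / 2) powr \<beta>) ^ n / (2 ^ n * b) ^ DIM('a)) * indicator (cball 0 (2 ^ (n + 1) * b)) h)"
proof (cases "b < norm h")
  case True
  define F where "F n = ennreal (((1 / 2) powr \<beta>) ^ n / (2 ^ n * b) ^ DIM('a)) * indicator (cball 0 (2 ^ (n + 1) * b)) h"
    for n :: nat
  obtain n :: nat where n: "2 ^ n * b \<le> norm h" "norm h \<le> 2 ^ (n + 1) * b"
    using dyadic_shell b True by blast
  have "(b / norm h) powr \<beta> \<le> (b / (2 ^ n * b)) powr \<beta>"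
    using n b \<beta> True by (intro powr_mono2 divide_left_mono mult_pos_pos) auto
  also have "b / (2 ^ n * b) = (1 / 2) powr real n"
    using b by (simp add: powr_realpow power_one_over)
  also have "((1 / 2) powr real n) powr \<beta> = ((1 / 2) powr \<beta>) ^ n"
    by (simp add: powr_powr powr_power mult.commute)
  finally have "tail_kernel b \<beta> h \<le> ((1 / 2) powr \<beta>) ^ n / (2 ^ n * b) ^ DIM('a)"
    unfolding tail_kernel_def using True n b by (auto intro!: frac_le power_mono)
  then have "ennreal (tail_kernel b \<beta> h) \<le> F n"
    using n by (simp add: F_def ennreal_leI)
  also have "\<dots> \<le> (\<Sum>n. F n)"
    using sum_le_suminf[OF summableI, of "{n}" F] by simp
  finally show ?thesis
    by (simp add: F_def)
qed (simp add: tail_kernel_def)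

lemma nn_integral_tail_kernel_finite:
  assumes b: "0 < b" and \<beta>: "0 < \<beta>"
  shows "(\<integral>\<^sup>+h. ennreal (tail_kernel b \<beta> h) \<partial>(lborel :: 'a::euclidean_space measure)) < \<infinity>"
proof -
  define N where "N = DIM('a)"
  define q where "q = (1 / 2) powr \<beta>"
  define c where "c n = q ^ n / (2 ^ n * b) ^ N" for n :: nat
  have q: "0 < q" "q < 1"
    using \<beta> powr_less_mono2[of \<beta> "1 / 2" 1] by (auto simp: q_def)
  have "(\<integral>\<^sup>+h. ennreal (tail_kernel b \<beta> h) \<partial>(lborel :: 'a measure))
      \<le> (\<integral>\<^sup>+h. (\<Sum>n. ennreal (c n) * indicator (cball (0::'a) (2 ^ (n + 1) * b)) h) \<partial>lborel)"
    unfolding c_def q_def N_def by (intro nn_integral_mono tail_kernel_le_dyadic_sum b \<beta>)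
  also have "\<dots> = (\<Sum>n. \<integral>\<^sup>+h. ennreal (c n) * indicator (cball (0::'a) (2 ^ (n + 1) * b)) h \<partial>lborel)"
    by (rule nn_integral_suminf) (auto intro!: borel_measurable_times_ennreal borel_measurable_indicator borel_closed)
  also have "\<dots> = (\<Sum>n. ennreal (unit_ball_vol N * 2 ^ N * q ^ n))"
  proof (intro suminf_cong)
    fix n
    have "c n * (unit_ball_vol N * (2 ^ (n + 1) * b) ^ N) = unit_ball_vol N * 2 ^ N * q ^ n"
      using b by (simp add: c_def power_mult_distrib field_simps)
    then show "(\<integral>\<^sup>+h. ennreal (c n) * indicator (cball (0::'a) (2 ^ (n + 1) * b)) h \<partial>lborel)
        = ennreal (unit_ball_vol N * 2 ^ N * q ^ n)"
      using b q by (simp add: nn_integral_cmult_indicator emeasure_cball N_def c_def ennreal_mult[symmetric])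
  qed
  also have "\<dots> < \<infinity>"
    using q by (simp add: ennreal_suminf_neq_top summable_geometric summable_mult top.not_eq_extremum)
  finally show ?thesis .
qed

definition gagliardo_majorant :: "real \<Rightarrow> real \<Rightarrow> real \<Rightarrow> 'a::euclidean_space \<Rightarrow> 'a \<Rightarrow> real" where
  "gagliardo_majorant C b \<beta> x y =
     C * indicator (cball 0 (1 + b)) x * indicator (cball 0 b) (y - x)
     + indicator (cball 0 1) x * tail_kernel b \<beta> (y - x) + indicator (cball 0 1) y * tail_kernel b \<beta> (x - y)"

lemma gagliardo_majorant_nonneg: "0 \<le> C \<Longrightarrow> 0 \<le> gagliardo_majorant C b \<beta> x y"
  by (simp add: gagliardo_majorant_def tail_kernel_nonneg)

lemma nn_integral_gagliardo_majorant_finite: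
  assumes "0 \<le> C" "0 < b" "0 < \<beta>"
  shows "(\<integral>\<^sup>+z. ennreal (gagliardo_majorant C b \<beta> (fst z) (snd z)) \<partial>(lborel \<Otimes>\<^sub>M (lborel :: 'a::euclidean_space measure))) < \<infinity>"
proof -
  define K1 where "K1 h = ennreal C * indicator (cball 0 b) h" for h :: 'a
  define K2 where "K2 h = ennreal (tail_kernel b \<beta> h)" for h :: 'a
  have [measurable]: "cball (0::'a) r \<in> sets borel" for r
    by (simp add: borel_closed)
  have [measurable]: "K1 \<in> borel_measurable borel" "K2 \<in> borel_measurable borel"
    unfolding K1_def K2_def by measurable
  have split: "ennreal (gagliardo_majorant C b \<beta> x y) = indicator (cball 0 (1 + b)) x * K1 (y - x)
      + indicator (cball 0 1) x * K2 (y - x) + indicator (cball 0 1) y * K2 (x - y)" for x y :: 'a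
    using assms(1)
    by (simp add: gagliardo_majorant_def K1_def K2_def indicator_def tail_kernel_nonneg flip: ennreal_plus)
  have "(\<integral>\<^sup>+h. K1 h \<partial>lborel) < \<infinity>" "(\<integral>\<^sup>+h. K2 h \<partial>lborel) < \<infinity>"
    using assms nn_integral_tail_kernel_finite[of b \<beta>]
    by (simp_all add: K1_def K2_def nn_integral_cmult_indicator emeasure_cball ennreal_mult_less_top)
  then show ?thesis
    using assms
    by (simp add: split nn_integral_add nn_integral_pair_indicator_diff emeasure_cball ennreal_mult_less_top)
qed

section \<open>Upper bound\<close>

lemma far_quotient_le:
  fixes D r b s p \<beta> N :: real
  assumes "0 < b" "b < r" "0 \<le> D" "D \<le> b powr s" "0 < p" "0 \<le> \<beta>" "\<beta> \<le> s * p"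
  shows "D powr p / r powr (N + s * p) \<le> (b / r) powr \<beta> / r powr N"
proof -
  have "D powr p / r powr (N + s * p) \<le> (b powr s) powr p / r powr (N + s * p)"
    using assms by (intro divide_right_mono powr_mono2) auto
  also have "\<dots> = (b / r) powr (s * p) / r powr N"
    using assms by (simp add: powr_powr powr_divide powr_add field_simps)
  also have "\<dots> \<le> (b / r) powr \<beta> / r powr N"
    using assms by (intro divide_right_mono powr_mono') auto
  finally show ?thesis .
qed

lemma lipschitz_quotient_le:
  fixes D r a \<Lambda> s p N :: real
  assumes "0 < r" "r \<le> a" "0 \<le> D" "D \<le> \<Lambda> * r" "\<Lambda> * a powr (1 - s) \<le> 1" "N \<le> p * (1 - s)" "0 < p"
  shows "D powr p / r powr (N + s * p) \<le> a powr (- N)"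
proof -
  have "0 \<le> \<Lambda> * r"
    using assms by linarith
  then have "0 \<le> \<Lambda>"
    using assms by (simp add: zero_le_mult_iff)
  have "D powr p / r powr (N + s * p) \<le> (\<Lambda> * r) powr p / r powr (N + s * p)"
    using assms by (intro divide_right_mono powr_mono2) auto
  also have "\<dots> = \<Lambda> powr p * r powr (p * (1 - s) - N)"
    using assms \<open>0 \<le> \<Lambda>\<close> by (simp add: powr_mult powr_diff algebra_simps)
  also have "\<dots> \<le> \<Lambda> powr p * a powr (p * (1 - s) - N)"
    using assms by (intro mult_left_mono powr_mono2) auto
  also have "\<dots> = (\<Lambda> * a powr (1 - s)) powr p * a powr (- N)"
    using assms \<open>0 \<le> \<Lambda>\<close> by (simp add: powr_mult powr_powr mult.commute flip: powr_add)
  also have "\<dots> \<le> a powr (- N)"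
    using assms \<open>0 \<le> \<Lambda>\<close> by (intro mult_left_le_one_le powr_le1) auto
  finally show ?thesis .
qed

lemma holder_quotient_le:
  fixes D r a s p N :: real
  assumes "0 < a" "a < r" "0 \<le> D" "D \<le> r powr (s - N / p)" "0 < p" "0 \<le> N"
  shows "D powr p / r powr (N + s * p) \<le> a powr (- 2 * N)"
proof -
  have "D powr p / r powr (N + s * p) \<le> (r powr (s - N / p)) powr p / r powr (N + s * p)"
    using assms by (intro divide_right_mono powr_mono2) auto
  also have "\<dots> = r powr (- 2 * N)"
    using assms by (simp add: powr_powr powr_diff[symmetric] algebra_simps)
  also have "\<dots> \<le> a powr (- 2 * N)"
    using assms by (intro powr_mono2') auto
  finally show ?thesis .
qed

lemma near_quotient_le:
  fixes D r a \<Lambda> s p N :: real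
  assumes "0 < r" "0 \<le> D" "D \<le> \<Lambda> * r" "D \<le> r powr (s - N / p)"
    and "0 < a" "\<Lambda> * a powr (1 - s) \<le> 1" "0 \<le> N" "N \<le> p * (1 - s)" "0 < p"
  shows "D powr p / r powr (N + s * p) \<le> a powr (- N) + a powr (- 2 * N)"
proof (cases "r \<le> a")
  case True
  then have "D powr p / r powr (N + s * p) \<le> a powr (- N)"
    using assms by (intro lipschitz_quotient_le)
  then show ?thesis
    using powr_ge_zero[of a "- 2 * N"] by linarith
next
  case False
  then have "D powr p / r powr (N + s * p) \<le> a powr (- 2 * N)"
    using assms by (intro holder_quotient_le) auto
  then show ?thesis
    using powr_ge_zero[of a "- N"] by linarith
qed

lemma gagliardo_integrand_le_majorant:
  fixes f :: "'a::euclidean_space \<Rightarrow> real"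
  assumes "0 < p" "real DIM('a) \<le> p * (1 - s)" "0 \<le> \<beta>" "\<beta> \<le> s * p"
    and holder: "\<And>x y. \<bar>f x - f y\<bar> \<le> norm (x - y) powr (s - real DIM('a) / p)"
    and lip: "\<And>x y. \<bar>f x - f y\<bar> \<le> \<Lambda> * norm (x - y)"
    and bounded: "\<And>x. \<bar>f x\<bar> \<le> M"
    and support: "\<And>x. 1 < norm x \<Longrightarrow> f x = 0"
    and "0 < a" "\<Lambda> * a powr (1 - s) \<le> 1" "0 < b" "2 * M \<le> b powr s"
  shows "\<bar>f x - f y\<bar> powr p / norm (x - y) powr (real DIM('a) + s * p)
    \<le> gagliardo_majorant (a powr (- real DIM('a)) + a powr (- 2 * real DIM('a))) b \<beta> x y"
    (is "?Q \<le> gagliardo_majorant ?C b \<beta> x y")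
proof -
  define r where "r = norm (x - y)"
  consider "r = 0 \<or> (1 < norm x \<and> 1 < norm y)" | "0 < r" "norm x \<le> 1 \<or> norm y \<le> 1" "b < r"
    | "0 < r" "norm x \<le> 1 \<or> norm y \<le> 1" "r \<le> b"
    by (force simp: r_def)
  then show ?thesis
  proof cases
    case 1
    then have "\<bar>f x - f y\<bar> = 0"
      using support by (auto simp: r_def)
    then show ?thesis
      by (simp add: gagliardo_majorant_nonneg)
  next
    case 2
    have "\<bar>f x - f y\<bar> \<le> b powr s"
      using bounded[of x] bounded[of y] assms by linarith
    then have "?Q \<le> (b / r) powr \<beta> / r powr real DIM('a)"
      using 2 assms unfolding r_def by (intro far_quotient_le) auto
    also have "\<dots> = tail_kernel b \<beta> (y - x)"
      using 2 by (simp add: tail_kernel_def r_def norm_minus_commute powr_realpow)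
    also have "\<dots> \<le> gagliardo_majorant ?C b \<beta> x y"
      using 2 tail_kernel_nonneg[of b \<beta>]
      by (auto simp: gagliardo_majorant_def indicator_def tail_kernel_def norm_minus_commute)
    finally show ?thesis .
  next
    case 3
    then have "?Q \<le> ?C"
      unfolding r_def using assms lip[of x y] holder[of x y] by (intro near_quotient_le) auto
    moreover have "norm x \<le> 1 + b"
      using 3 norm_triangle_ineq2[of x y] norm_triangle_ineq3[of x y] unfolding r_def by linarith
    ultimately show ?thesis
      using 3 by (simp add: gagliardo_majorant_def tail_kernel_def r_def norm_minus_commute)
  qed
qed

lemma gagliardo_pow_le_majorant:
  fixes f :: "'a::euclidean_space \<Rightarrow> real"
  assumes "0 < p" "real DIM('a) \<le> p * (1 - s)" "0 \<le> \<beta>" "\<beta> \<le> s * p"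
    and "\<And>x y. \<bar>f x - f y\<bar> \<le> norm (x - y) powr (s - real DIM('a) / p)"
    and "\<And>x y. \<bar>f x - f y\<bar> \<le> \<Lambda> * norm (x - y)"
    and "\<And>x. \<bar>f x\<bar> \<le> M"
    and "\<And>x. 1 < norm x \<Longrightarrow> f x = 0"
    and "0 < a" "\<Lambda> * a powr (1 - s) \<le> 1" "0 < b" "2 * M \<le> b powr s"
  shows "gagliardo_pow s p f \<le> (\<integral>\<^sup>+z. ennreal (gagliardo_majorant
      (a powr (- real DIM('a)) + a powr (- 2 * real DIM('a))) b \<beta> (fst z) (snd z)) \<partial>(lborel \<Otimes>\<^sub>M (lborel :: 'a measure)))"
  unfolding gagliardo_pow_def by (intro nn_integral_mono ennreal_leI gagliardo_integrand_le_majorant[OF assms])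

lemma holder_semi_bump_bounds:
  assumes "0 \<le> \<alpha>" "\<alpha> \<le> 1"
  shows "ereal (exp (- 1)) \<le> holder_semi \<alpha> (bump :: 'a::euclidean_space \<Rightarrow> real)"
    and "holder_semi \<alpha> (bump :: 'a \<Rightarrow> real) \<le> ereal 10"
proof -
  obtain e :: 'a where "e \<in> Basis"
    using nonempty_Basis by blast
  then have "norm e = 1" "e \<noteq> 0"
    by auto
  then show "ereal (exp (- 1)) \<le> holder_semi \<alpha> (bump :: 'a \<Rightarrow> real)"
    using holder_semi_ge_quotient[of 0 e bump \<alpha>] by (simp add: bump_0 bump_eq_0)
  have "holder_semi \<alpha> (bump :: 'a \<Rightarrow> real) \<le> ereal (8 + 2 * 1)"
    by (rule holder_semi_le_lipschitz_bounded[OF assms]) (simp_all add: bump_lipschitz abs_bump_le_1)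
  then show "holder_semi \<alpha> (bump :: 'a \<Rightarrow> real) \<le> ereal 10"
    by simp
qed

lemma normalized_bump:
  assumes "0 \<le> \<alpha>" "\<alpha> \<le> 1"
  obtains c where "0 < c" "c \<le> exp 1" "holder_semi \<alpha> (\<lambda>x::'a::euclidean_space. c * bump x) = 1"
proof -
  obtain L where L: "holder_semi \<alpha> (bump :: 'a \<Rightarrow> real) = ereal L"
    using holder_semi_bump_bounds[OF assms, where 'a = 'a] by (cases "holder_semi \<alpha> (bump :: 'a \<Rightarrow> real)") auto
  then have "exp (- 1) \<le> L"
    using holder_semi_bump_bounds(1)[OF assms, where 'a = 'a] by simp
  moreover have "0 < exp (- 1 :: real)"
    by simp
  ultimately have "0 < L"
    by linarith
  with \<open>exp (- 1) \<le> L\<close> have "1 / L \<le> exp 1"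
    by (simp add: exp_minus field_simps)
  moreover have "holder_semi \<alpha> (\<lambda>x::'a. 1 / L * bump x) = 1"
    using L \<open>0 < L\<close> by (subst holder_semi_cmult) auto
  ultimately show ?thesis
    using \<open>0 < L\<close> that[of "1 / L"] by simp
qed

text \<open>The normalized bump is (8 e)-Lipschitz and bounded by e, and a, b are chosen so that
  8 e a^(1-s) = 1 and 2 e = b^s.\<close>
lemma m_sp_le_majorant_integral:
  fixes s p \<beta> :: real
  defines "a \<equiv> (1 / (8 * exp 1)) powr (1 / (1 - s))" and "b \<equiv> (2 * exp 1) powr (1 / s)"
  assumes s: "0 < s" "s < 1" and p: "real DIM('a) < p * s" "real DIM('a) \<le> p * (1 - s)"
    and \<beta>: "0 < \<beta>" "\<beta> \<le> s * p"
  shows "m_sp TYPE('a::euclidean_space) s p \<le> (\<integral>\<^sup>+z. ennreal (gagliardo_majorant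
      (a powr (- real DIM('a)) + a powr (- 2 * real DIM('a))) b \<beta> (fst z) (snd z)) \<partial>(lborel \<Otimes>\<^sub>M (lborel :: 'a measure)))"
proof -
  have "0 < p * s"
    using p(1) of_nat_0_less_iff[of "DIM('a)"] by linarith
  then have "0 < p"
    using s by (simp add: zero_less_mult_iff)
  then have \<alpha>: "0 \<le> s - real DIM('a) / p" "s - real DIM('a) / p \<le> 1"
    using p s by (simp_all add: field_simps)
  obtain c where c: "0 < c" "c \<le> exp 1" and holder: "holder_semi (s - real DIM('a) / p) (\<lambda>x::'a. c * bump x) = 1"
    using normalized_bump[OF \<alpha>] by blast
  have "m_sp TYPE('a) s p \<le> gagliardo_pow s p (\<lambda>x::'a. c * bump x)"
    unfolding m_sp_def using holder test_fun_cmult[OF test_fun_bump]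
    by (intro INF_lower) (simp add: alpha_sp_def)
  also have "\<dots> \<le> (\<integral>\<^sup>+z. ennreal (gagliardo_majorant
      (a powr (- real DIM('a)) + a powr (- 2 * real DIM('a))) b \<beta> (fst z) (snd z)) \<partial>(lborel \<Otimes>\<^sub>M (lborel :: 'a measure)))"
  proof (rule gagliardo_pow_le_majorant[where \<Lambda> = "8 * c" and M = c])
    have "holder_semi (s - real DIM('a) / p) (\<lambda>x::'a. c * bump x) \<le> ereal 1"
      using holder by simp
    from abs_diff_le_holder_semi[OF this]
    show "\<bar>c * bump x - c * bump y\<bar> \<le> norm (x - y) powr (s - real DIM('a) / p)" for x y :: 'a
      by simp
    show "\<bar>c * bump x - c * bump y\<bar> \<le> 8 * c * norm (x - y)" for x y :: 'a
      using bump_lipschitz[of x y] \<open>0 < c\<close> by (simp add: abs_mult mult_left_mono flip: right_diff_distrib)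
    show "\<bar>c * bump x\<bar> \<le> c" for x :: 'a
      using abs_bump_le_1[of x] \<open>0 < c\<close> by (simp add: abs_mult mult_left_le)
    show "c * bump x = 0" if "1 < norm x" for x :: 'a
      using that by (simp add: bump_eq_0)
    have "a powr (1 - s) = 1 / (8 * exp 1)" "b powr s = 2 * exp 1"
      using s by (simp_all add: a_def b_def powr_powr)
    then show "8 * c * a powr (1 - s) \<le> 1" "2 * c \<le> b powr s"
      using c by simp_all
  qed (use s p \<beta> \<open>0 < p\<close> in \<open>simp_all add: a_def b_def\<close>)
  finally show ?thesis .
qed

lemma m_sp_eventually_bounded:
  assumes s: "0 < s" "s < 1"
  obtains K where "K < \<infinity>" "eventually (\<lambda>p. m_sp TYPE('a::euclidean_space) s p \<le> K) at_top"
proof -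
  define N where "N = real DIM('a)"
  define P where "P = N / s + N / (1 - s) + 1"
  define a where "a = (1 / (8 * exp 1)) powr (1 / (1 - s))"
  define b where "b = (2 * exp 1) powr (1 / s)"
  define K where "K = (\<integral>\<^sup>+z. ennreal (gagliardo_majorant (a powr (- N) + a powr (- 2 * N)) b (s * P) (fst z) (snd z))
    \<partial>(lborel \<Otimes>\<^sub>M (lborel :: 'a measure)))"
  have "0 \<le> N / s" "0 \<le> N / (1 - s)"
    using s by (simp_all add: N_def)
  have "K < \<infinity>"
    unfolding K_def using \<open>0 \<le> N / s\<close> \<open>0 \<le> N / (1 - s)\<close> s
    by (intro nn_integral_gagliardo_majorant_finite) (simp_all add: b_def P_def add_pos_nonneg)
  moreover have "m_sp TYPE('a) s p \<le> K" if "P \<le> p" for p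
  proof -
    have "N / s < p" "N / (1 - s) \<le> p"
      using that \<open>0 \<le> N / s\<close> \<open>0 \<le> N / (1 - s)\<close> unfolding P_def by linarith+
    then have "N < p * s" "N \<le> p * (1 - s)"
      using s by (simp_all add: divide_less_eq divide_le_eq mult.commute)
    then show ?thesis
      unfolding K_def a_def b_def N_def using s that \<open>0 \<le> N / s\<close> \<open>0 \<le> N / (1 - s)\<close>
      by (intro m_sp_le_majorant_integral) (simp_all add: N_def P_def add_pos_nonneg)
  qed
  ultimately show ?thesis
    by (intro that[of K]) (auto simp: eventually_at_top_linorder)
qed

section \<open>Lower bound\<close>

lemma gagliardo_pow_ge_on_product:
  fixes f :: "'a::euclidean_space \<Rightarrow> real"
  assumes "A \<in> sets lborel" "B \<in> sets lborel" "0 \<le> G"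
    and "\<And>x y. x \<in> A \<Longrightarrow> y \<in> B \<Longrightarrow> G \<le> \<bar>f x - f y\<bar> powr p / norm (x - y) powr (real DIM('a) + s * p)"
  shows "ennreal G * (emeasure lborel A * emeasure lborel B) \<le> gagliardo_pow s p f"
proof -
  have "ennreal G * (emeasure lborel A * emeasure lborel B) = (\<integral>\<^sup>+z. ennreal G * indicator (A \<times> B) z \<partial>(lborel \<Otimes>\<^sub>M lborel))"
    using assms by (simp add: nn_integral_cmult_indicator lborel.emeasure_pair_measure_Times)
  also have "\<dots> \<le> gagliardo_pow s p f"
    unfolding gagliardo_pow_def using assms(4)
    by (intro nn_integral_mono) (auto simp: indicator_def ennreal_leI mem_Times_iff)
  finally show ?thesis .
qed

lemma perturbed_quotient_ge:
  fixes D \<rho> r g s p N :: real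
  assumes "0 < r" "0 < \<rho>" "\<rho> \<le> (1 + 2 * g) * r" "(1 - 3 * g) * r powr (s - N / p) \<le> D"
    and "0 < g" "g < 1 / 5" "0 < p" "0 \<le> N" "0 \<le> s" "s \<le> 1"
  shows "(1 - 5 * g) powr p * r powr (- 2 * N) / (1 + 2 * g) powr N \<le> D powr p / \<rho> powr (N + s * p)"
proof -
  define A where "A = (1 - 3 * g) * r powr (s - N / p)"
  have "0 < A"
    using assms by (simp add: A_def)
  have "(1 - 5 * g) * (1 + 2 * g) \<le> 1 - 3 * g"
    by (simp add: algebra_simps)
  then have "(1 - 5 * g) powr p \<le> ((1 - 3 * g) / (1 + 2 * g)) powr p"
    using assms by (intro powr_mono2) (auto simp: le_divide_eq)
  then have "(1 - 5 * g) powr p * r powr (- 2 * N) / (1 + 2 * g) powr N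
      \<le> ((1 - 3 * g) / (1 + 2 * g)) powr p * r powr (- 2 * N) / (1 + 2 * g) powr N"
    by (intro divide_right_mono mult_right_mono) auto
  also have "\<dots> = A powr p / ((1 + 2 * g) powr (N + p) * r powr (N + s * p))"
  proof -
    have "(r powr (s - N / p)) powr p = r powr (s * p) / r powr N"
      using assms by (simp add: powr_powr left_diff_distrib flip: powr_diff)
    then have Ap: "A powr p = (1 - 3 * g) powr p * (r powr (s * p) / r powr N)"
      unfolding A_def by (simp add: powr_mult)
    have "r powr (- 2 * N) = r powr (s * p - N - (N + s * p))"
      by simp
    then have r2N: "r powr (- 2 * N) = r powr (s * p) / r powr N / r powr (N + s * p)"
      by (simp only: powr_diff)
    show ?thesis
      unfolding Ap r2N using assms by (simp add: powr_divide powr_add field_simps)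
  qed
  also have "\<dots> \<le> A powr p / ((1 + 2 * g) powr (N + s * p) * r powr (N + s * p))"
    using assms by (intro divide_left_mono mult_right_mono powr_mono mult_pos_pos) (auto intro: mult_left_le_one_le)
  also have "\<dots> = A powr p / ((1 + 2 * g) * r) powr (N + s * p)"
    using assms by (simp add: powr_mult)
  also have "\<dots> \<le> D powr p / \<rho> powr (N + s * p)"
    using assms \<open>0 < A\<close> by (intro frac_le powr_mono2) (auto simp: A_def)
  finally show ?thesis .
qed

lemma perturbed_pair_bounds:
  fixes f :: "'a::real_normed_vector \<Rightarrow> real"
  assumes osc: "\<And>u v. \<bar>f u - f v\<bar> \<le> norm (u - v) powr \<alpha>" and "0 \<le> \<alpha>"
    and extremal: "(1 - g) * norm (x - y) powr \<alpha> < \<bar>f x - f y\<bar>" and "x \<noteq> y" "g < 1 / 2"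
    and t: "t \<le> g * norm (x - y)" "t powr \<alpha> \<le> g * norm (x - y) powr \<alpha>"
    and x': "x' \<in> ball x t" and y': "y' \<in> ball y t"
  shows "(1 - 3 * g) * norm (x - y) powr \<alpha> \<le> \<bar>f x' - f y'\<bar>"
    and "0 < norm (x' - y')" "norm (x' - y') \<le> (1 + 2 * g) * norm (x - y)"
proof -
  define r where "r = norm (x - y)"
  have "0 < r"
    using \<open>x \<noteq> y\<close> by (simp add: r_def)
  have close: "\<bar>f u - f v\<bar> \<le> g * r powr \<alpha>" if "dist u v < t" for u v
  proof -
    have "norm (u - v) powr \<alpha> \<le> t powr \<alpha>"
      using that \<open>0 \<le> \<alpha>\<close> by (intro powr_mono2) (auto simp: dist_norm)
    then show ?thesis
      using osc[of u v] t by (simp add: r_def)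
  qed
  have "\<bar>f x - f x'\<bar> \<le> g * r powr \<alpha>" "\<bar>f y - f y'\<bar> \<le> g * r powr \<alpha>"
    using close x' y' by auto
  then show "(1 - 3 * g) * r powr \<alpha> \<le> \<bar>f x' - f y'\<bar>"
    using extremal by (simp add: r_def algebra_simps)
  have "norm (x' - y') \<le> norm (x' - y) + norm (y' - y)" "norm (x' - y) \<le> norm (x' - x) + r"
    "r \<le> norm (x' - x) + norm (x' - y)" "norm (x' - y) \<le> norm (x' - y') + norm (y' - y)"
    using norm_triangle_ineq[of "x' - y" "y - y'"] norm_triangle_ineq[of "x' - x" "x - y"]
      norm_triangle_ineq[of "x - x'" "x' - y"] norm_triangle_ineq[of "x' - y'" "y' - y"]
    by (simp_all add: r_def norm_minus_commute)
  moreover have "norm (x' - x) < t" "norm (y' - y) < t"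
    using x' y' by (simp_all add: dist_norm norm_minus_commute)
  moreover have "g * r < r / 2" "(1 + 2 * g) * r = r + 2 * (g * r)"
    using \<open>g < 1 / 2\<close> \<open>0 < r\<close> by (simp_all add: algebra_simps)
  ultimately show "0 < norm (x' - y')" "norm (x' - y') \<le> (1 + 2 * g) * r"
    using t[folded r_def] by linarith+
qed

lemma powr_two_div_le:
  fixes g s \<alpha> :: real
  assumes "0 < g" "g \<le> 1" "0 < s" "s \<le> 2" "s / 2 \<le> \<alpha>"
  shows "g powr (2 / s) \<le> g" and "(g powr (2 / s)) powr \<alpha> \<le> g"
proof -
  show "g powr (2 / s) \<le> g"
    using powr_mono'[of 1 "2 / s" g] assms by (simp add: le_divide_eq)
  have "(g powr (2 / s)) powr \<alpha> \<le> (g powr (2 / s)) powr (s / 2)"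
    using assms \<open>g powr (2 / s) \<le> g\<close> by (intro powr_mono') auto
  also have "\<dots> = g"
    using assms by (simp add: powr_powr)
  finally show "(g powr (2 / s)) powr \<alpha> \<le> g" .
qed

lemma gagliardo_pow_ge_if_holder_semi_eq_1:
  fixes f :: "'a::euclidean_space \<Rightarrow> real"
  assumes s: "0 < s" "s \<le> 1" and p: "0 < p" "real DIM('a) / p \<le> s / 2"
    and holder: "holder_semi (s - real DIM('a) / p) f = 1"
    and g: "0 < g" "g < 1 / 5"
  shows "ennreal ((unit_ball_vol DIM('a) * (g powr (2 / s)) ^ DIM('a)) ^ 2 / (1 + 2 * g) powr DIM('a)
      * (1 - 5 * g) powr p) \<le> gagliardo_pow s p f"
proof -
  define N where "N = real DIM('a)"
  define \<alpha> where "\<alpha> = s - N / p"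
  define d where "d = g powr (2 / s)"
  have \<alpha>: "s / 2 \<le> \<alpha>" "0 < \<alpha>"
    using p s unfolding \<alpha>_def N_def by linarith+
  have "0 < d" "d \<le> g" "d powr \<alpha> \<le> g"
    using powr_two_div_le[of g s \<alpha>] g s \<alpha> by (simp_all add: d_def)
  obtain x y where "x \<noteq> y" and extremal: "(1 - g) * norm (x - y) powr \<alpha> < \<bar>f x - f y\<bar>"
    using holder_semi_near_extremal[of \<alpha> f "1 - g"] holder g by (auto simp: \<alpha>_def N_def)
  define r where "r = norm (x - y)"
  define t where "t = d * r"
  have "0 < r" "0 < t"
    using \<open>x \<noteq> y\<close> \<open>0 < d\<close> by (simp_all add: r_def t_def)
  have t: "t \<le> g * r" "t powr \<alpha> \<le> g * r powr \<alpha>"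
    using \<open>d \<le> g\<close> \<open>d powr \<alpha> \<le> g\<close> \<open>0 < d\<close> \<open>0 < r\<close> by (simp_all add: t_def powr_mult mult_right_mono)
  have osc: "\<bar>f u - f v\<bar> \<le> norm (u - v) powr \<alpha>" for u v
    using abs_diff_le_holder_semi[of \<alpha> f 1] holder by (simp add: \<alpha>_def N_def)
  define G where "G = (1 - 5 * g) powr p * r powr (- 2 * N) / (1 + 2 * g) powr N"
  have "G \<le> \<bar>f x' - f y'\<bar> powr p / norm (x' - y') powr (N + s * p)"
    if "x' \<in> ball x t" "y' \<in> ball y t" for x' y'
    unfolding G_def using perturbed_pair_bounds[OF osc _ extremal \<open>x \<noteq> y\<close> _ t[unfolded r_def] that] \<alpha> \<open>0 < r\<close> g p s
    by (intro perturbed_quotient_ge) (auto simp: \<alpha>_def N_def r_def)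
  then have "ennreal G * (emeasure lborel (ball x t) * emeasure lborel (ball y t)) \<le> gagliardo_pow s p f"
    by (intro gagliardo_pow_ge_on_product) (auto simp: G_def N_def)
  also have "ennreal G * (emeasure lborel (ball x t) * emeasure lborel (ball y t))
      = ennreal ((unit_ball_vol N * d ^ DIM('a)) ^ 2 / (1 + 2 * g) powr N * (1 - 5 * g) powr p)"
  proof -
    have "r powr (- 2 * N) * (r ^ DIM('a) * r ^ DIM('a)) = 1"
      using \<open>0 < r\<close> by (simp add: N_def powr_realpow[symmetric] powr_add[symmetric])
    then have "G * (unit_ball_vol N * t ^ DIM('a) * (unit_ball_vol N * t ^ DIM('a)))
        = (unit_ball_vol N * d ^ DIM('a)) ^ 2 / (1 + 2 * g) powr N * (1 - 5 * g) powr p"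
      by (simp add: G_def t_def power_mult_distrib power2_eq_square field_simps)
    then show ?thesis
      using \<open>0 < t\<close> by (simp add: emeasure_ball N_def G_def ennreal_mult[symmetric])
  qed
  finally show ?thesis
    by (simp add: N_def d_def)
qed

lemma m_sp_eventually_ge:
  assumes s: "0 < s" "s < 1" and \<epsilon>: "0 < \<epsilon>" "\<epsilon> < 1"
  obtains c where "0 < c" "eventually (\<lambda>p. ennreal (c * (1 - \<epsilon>) powr p) \<le> m_sp TYPE('a::euclidean_space) s p) at_top"
proof -
  define N where "N = real DIM('a)"
  define g where "g = \<epsilon> / 5"
  define c where "c = (unit_ball_vol N * (g powr (2 / s)) ^ DIM('a)) ^ 2 / (1 + 2 * g) powr N"
  have "0 < g" "g < 1 / 5" "1 - 5 * g = 1 - \<epsilon>"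
    using \<epsilon> by (simp_all add: g_def)
  then have "0 < c"
    unfolding c_def N_def by (intro divide_pos_pos zero_less_power mult_pos_pos unit_ball_vol_pos) auto
  moreover have "ennreal (c * (1 - \<epsilon>) powr p) \<le> m_sp TYPE('a) s p" if "2 * N / s \<le> p" for p
  proof -
    have "0 < 2 * N / s"
      using s by (simp add: N_def)
    then have "0 < p"
      using that by linarith
    then have "N / p \<le> s / 2"
      using that s by (simp add: field_simps)
    show ?thesis
      unfolding m_sp_def
    proof (rule INF_greatest)
      fix f :: "'a \<Rightarrow> real"
      assume "f \<in> {f. test_fun f \<and> holder_semi (alpha_sp TYPE('a) s p) f = 1}"
      then have "holder_semi (s - real DIM('a) / p) f = 1"
        by (simp add: alpha_sp_def)
      from gagliardo_pow_ge_if_holder_semi_eq_1[OF _ _ \<open>0 < p\<close> _ this \<open>0 < g\<close> \<open>g < 1 / 5\<close>] s \<open>N / p \<le> s / 2\<close>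
      show "ennreal (c * (1 - \<epsilon>) powr p) \<le> gagliardo_pow s p f"
        by (simp add: c_def N_def \<open>1 - 5 * g = 1 - \<epsilon>\<close>)
    qed
  qed
  ultimately show ?thesis
    by (intro that) (auto simp: eventually_at_top_linorder)
qed

lemma eventually_powr_inverse_less:
  fixes m :: "real \<Rightarrow> real"
  assumes "\<And>p. 0 \<le> m p" "eventually (\<lambda>p. m p \<le> K) at_top" "1 < a"
  shows "eventually (\<lambda>p. m p powr (1 / p) < a) at_top"
proof -
  have "((\<lambda>p. max K 1 powr (1 / p)) \<longlongrightarrow> max K 1 powr 0) at_top"
    by (intro tendsto_intros tendsto_divide_0[OF tendsto_const filterlim_at_top_imp_at_infinity[OF filterlim_ident]]) auto
  then have "eventually (\<lambda>p. max K 1 powr (1 / p) < a) at_top"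
    using \<open>1 < a\<close> by (simp add: order_tendstoD)
  with assms(2) eventually_gt_at_top[of 0] show ?thesis
  proof eventually_elim
    case (elim p)
    have "m p powr (1 / p) \<le> max K 1 powr (1 / p)"
      using elim assms(1) by (intro powr_mono2) auto
    then show ?case
      using elim by linarith
  qed
qed

lemma eventually_powr_inverse_greater:
  fixes m :: "real \<Rightarrow> real"
  assumes "0 < c" "0 < q" "eventually (\<lambda>p. c * q powr p \<le> m p) at_top" "a < q"
  shows "eventually (\<lambda>p. a < m p powr (1 / p)) at_top"
proof -
  have "((\<lambda>p. c powr (1 / p) * q) \<longlongrightarrow> c powr 0 * q) at_top"
    using \<open>0 < c\<close> by (intro tendsto_intros tendsto_divide_0[OF tendsto_const filterlim_at_top_imp_at_infinity[OF filterlim_ident]]) auto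
  then have "eventually (\<lambda>p. a < c powr (1 / p) * q) at_top"
    using \<open>0 < c\<close> \<open>a < q\<close> by (simp add: order_tendstoD)
  with assms(3) eventually_gt_at_top[of 0] show ?thesis
  proof eventually_elim
    case (elim p)
    have "c powr (1 / p) * q = (c * q powr p) powr (1 / p)"
      using elim assms by (simp add: powr_mult powr_powr)
    also have "\<dots> \<le> m p powr (1 / p)"
      using elim assms by (intro powr_mono2) auto
    finally show ?case
      using elim by linarith
  qed
qed

text \<open>The hypothesis K < \<infinity> cannot be dropped: enn2real maps \<infinity> to 0.\<close>
lemma enn2real_powr_inverse_tendsto_1:
  fixes m :: "real \<Rightarrow> ennreal"
  assumes upper: "K < \<infinity>" "eventually (\<lambda>p. m p \<le> K) at_top"
    and lower: "\<And>\<epsilon>. 0 < \<epsilon> \<Longrightarrow> \<epsilon> < 1 \<Longrightarrow> \<exists>c>0. eventually (\<lambda>p. ennreal (c * (1 - \<epsilon>) powr p) \<le> m p) at_top"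
  shows "((\<lambda>p. enn2real (m p) powr (1 / p)) \<longlongrightarrow> 1) at_top"
proof (rule order_tendstoI)
  fix a :: real
  assume "1 < a"
  have "eventually (\<lambda>p. enn2real (m p) \<le> enn2real K) at_top"
    using upper by (auto elim!: eventually_mono intro: enn2real_mono)
  with \<open>1 < a\<close> show "eventually (\<lambda>p. enn2real (m p) powr (1 / p) < a) at_top"
    by (intro eventually_powr_inverse_less) auto
next
  fix a :: real
  assume "a < 1"
  define \<epsilon> where "\<epsilon> = min (1 / 2) ((1 - a) / 2)"
  have "0 < \<epsilon>" "\<epsilon> < 1" "a < 1 - \<epsilon>"
    using \<open>a < 1\<close> by (auto simp: \<epsilon>_def min_def field_simps)
  then obtain c where "0 < c" and c: "eventually (\<lambda>p. ennreal (c * (1 - \<epsilon>) powr p) \<le> m p) at_top"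
    using lower by blast
  from c upper(2) have "eventually (\<lambda>p. c * (1 - \<epsilon>) powr p \<le> enn2real (m p)) at_top"
  proof eventually_elim
    case (elim p)
    then have "enn2real (ennreal (c * (1 - \<epsilon>) powr p)) \<le> enn2real (m p)"
      using upper(1) by (intro enn2real_mono) auto
    then show ?case
      using \<open>0 < c\<close> by simp
  qed
  then show "eventually (\<lambda>p. a < enn2real (m p) powr (1 / p)) at_top"
    using \<open>0 < c\<close> \<open>\<epsilon> < 1\<close> \<open>a < 1 - \<epsilon>\<close> by (intro eventually_powr_inverse_greater) auto
qed

theorem proposition8p4:
  fixes s :: real
  assumes "0 < s" and "s < 1"
  shows "((\<lambda>p. enn2real (m_sp TYPE('a::euclidean_space) s p) powr (1 / p)) \<longlongrightarrow> 1) at_top"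
proof -
  obtain K where "K < \<infinity>" "eventually (\<lambda>p. m_sp TYPE('a) s p \<le> K) at_top"
    using m_sp_eventually_bounded assms by blast
  moreover have "\<exists>c>0. eventually (\<lambda>p. ennreal (c * (1 - \<epsilon>) powr p) \<le> m_sp TYPE('a) s p) at_top"
    if "0 < \<epsilon>" "\<epsilon> < 1" for \<epsilon>
    using m_sp_eventually_ge[OF assms that] by blast
  ultimately show ?thesis
    by (rule enn2real_powr_inverse_tendsto_1)
qed

end
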